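(* Let $f$ be as in the standing setting and suppose $f$ is quasi-strongly convex on $X$ with constant $\kappa_f>0$, i.e. $$f^*\ \ge\ f(x)+\langle \nabla f(x),\bar x-x\rangle+\tfrac{\kappa_f}{2}\|x-\bar x\|^2\qquad\forall x\in X .$$ Then $f$ has a quadratic under-approximation on $X$ with the same constant, i.e. $$f(x)\ \ge\ f^*+\langle \nabla f(\bar x),x-\bar x\rangle+\tfrac{\kappa_f}{2}\|x-\bar x\|^2\qquad\forall x\in X .$$
   Context: Standing setting: $X\subseteq\mathbb{R}^n$ is a nonempty closed convex set; $f:X\to\mathbb{R}$ is convex and continuously differentiable, with $L_f$-Lipschitz continuous gradient on $X$ ($\|\nabla f(x)-\nabla f(y)\|\le L_f\|x-y\|$ for all $x,y\in X$, $L_f>0$). Consider the problem $f^*=\min_{x\in X}f(x)$, whose optimal set $X^*=\arg\min_{x\in X}f(x)$ is assumed nonempty and closed and $f^*$ finite. $\|\cdot\|$ is the Euclidean norm, $[u]_S$ denotes the Euclidean projection of $u$ onto a closed convex set $S$, and for $x\in X$ we write $\bar x=[x]_{X^*}$. *)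

theory Defs
  imports "HOL-Analysis.Analysis"
begin

end

theory Submission
  imports Defs
begin

text \<open>Let \<open>x\<^sub>b\<close> be the projection of \<open>x\<close> onto the optimal set and \<open>v = x - x\<^sub>b\<close>.
Every point \<open>x\<^sub>t = x\<^sub>b + t v\<close>, \<open>0 \<le> t \<le> 1\<close>, has the same projection \<open>x\<^sub>b\<close>, so quasi-strong
convexity at \<open>x\<^sub>t\<close> reads \<open>\<phi> t + c t\<^sup>2 \<le> t \<phi>' t\<close> for \<open>\<phi> t = f x\<^sub>t - f\<^sup>*\<close> and
\<open>c = \<kappa>\<^sub>f/2 \<parallel>v\<parallel>\<^sup>2\<close>. This says exactly that \<open>\<phi> t / t - c t\<close> is nondecreasing on \<open>]0,1]\<close>;
its limit at \<open>0\<close> is \<open>\<phi>' 0 = \<langle>\<nabla>f x\<^sub>b, v\<rangle>\<close> and its value at \<open>1\<close> is \<open>f x - f\<^sup>* - c\<close>.\<close>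

lemma convex_minimizers:
  fixes f :: "'a::real_vector \<Rightarrow> real"
  assumes "convex X" "convex_on X f" "\<And>y. y \<in> X \<Longrightarrow> m \<le> f y"
  shows "convex {x\<in>X. f x = m}"
proof (rule convexI)
  fix y z :: 'a and u w :: real
  assume y: "y \<in> {x\<in>X. f x = m}" and z: "z \<in> {x\<in>X. f x = m}"
    and uw: "0 \<le> u" "0 \<le> w" "u + w = 1"
  have X: "u *\<^sub>R y + w *\<^sub>R z \<in> X"
    using assms(1) y z uw unfolding convex_def by blast
  have "f (u *\<^sub>R y + w *\<^sub>R z) \<le> u * f y + w * f z"
    using assms(2) y z uw unfolding convex_on_def by blast
  also have "\<dots> = m"
    using y z uw by (simp flip: distrib_right)
  finally show "u *\<^sub>R y + w *\<^sub>R z \<in> {x\<in>X. f x = m}"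
    using X assms(3)[OF X] by simp
qed

lemma closest_point_on_ray:
  fixes S :: "'a::{real_inner,heine_borel} set"
  assumes "convex S" "closed S" "S \<noteq> {}" "0 \<le> t"
  shows "closest_point S (closest_point S x + t *\<^sub>R (x - closest_point S x)) = closest_point S x"
proof -
  define p where "p = closest_point S x"
  define v where "v = x - p"
  have pS: "p \<in> S"
    unfolding p_def using closest_point_in_set[OF assms(2,3)] .
  have "dist (p + t *\<^sub>R v) p \<le> dist (p + t *\<^sub>R v) z" if zS: "z \<in> S" for z
  proof -
    have obtuse: "v \<bullet> (z - p) \<le> 0"
      unfolding v_def p_def using closest_point_dot[OF assms(1,2) zS] .
    have "(dist (p + t *\<^sub>R v) z)\<^sup>2 = (norm (t *\<^sub>R v - (z - p)))\<^sup>2"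
      by (simp add: dist_norm algebra_simps)
    also have "\<dots> = t\<^sup>2 * (norm v)\<^sup>2 - 2 * t * (v \<bullet> (z - p)) + (norm (z - p))\<^sup>2"
      using dot_norm_neg[of "t *\<^sub>R v" "z - p"] by (simp add: power_mult_distrib)
    also have "\<dots> \<ge> t\<^sup>2 * (norm v)\<^sup>2"
      using mult_nonneg_nonpos[OF \<open>0 \<le> t\<close> obtuse] zero_le_power2[of "norm (z - p)"] by linarith
    finally have "(dist (p + t *\<^sub>R v) p)\<^sup>2 \<le> (dist (p + t *\<^sub>R v) z)\<^sup>2"
      by (simp add: dist_norm power_mult_distrib)
    then show ?thesis
      by (simp add: power2_le_iff_abs_le)
  qed
  then show ?thesis
    using closest_point_unique[OF assms(1,2) pS] unfolding p_def v_def by metis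
qed

lemma has_derivative_along_segment:
  assumes "\<And>y. y \<in> X \<Longrightarrow> (f has_derivative (\<lambda>h. gradf y \<bullet> h)) (at y within X)"
    and "\<And>t. t \<in> {0..1} \<Longrightarrow> a + t *\<^sub>R v \<in> X" and "t \<in> {0..1}"
  shows "((\<lambda>s. f (a + s *\<^sub>R v)) has_real_derivative gradf (a + t *\<^sub>R v) \<bullet> v)
           (at t within {0..1})"
proof -
  have "((\<lambda>s. a + s *\<^sub>R v) has_derivative (\<lambda>s. s *\<^sub>R v)) (at t within {0..1})"
    by (auto intro!: derivative_eq_intros)
  from has_derivative_in_compose2[OF assms(1) _ assms(3) this] assms(2)
  have "((\<lambda>s. f (a + s *\<^sub>R v)) has_derivative (\<lambda>s. gradf (a + t *\<^sub>R v) \<bullet> (s *\<^sub>R v)))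
          (at t within {0..1})"
    by blast
  then show ?thesis
    by (simp add: has_field_derivative_def mult.commute[of _ "gradf _ \<bullet> v"])
qed

lemma slope_minus_linear_mono:
  fixes \<phi> D :: "real \<Rightarrow> real"
  assumes deriv: "\<And>t. t \<in> {0..1} \<Longrightarrow> (\<phi> has_real_derivative D t) (at t within {0..1})"
    and growth: "\<And>t. 0 < t \<Longrightarrow> t \<le> 1 \<Longrightarrow> \<phi> t + c * t\<^sup>2 \<le> t * D t"
    and s: "0 < s" "s \<le> 1"
  shows "\<phi> s / s - c * s \<le> \<phi> 1 - c"
proof -
  define \<psi> where "\<psi> t = \<phi> t / t - c * t" for t
  have "\<psi> s \<le> \<psi> 1"
  proof (rule DERIV_nonneg_imp_increasing_open[OF s(2)])
    fix t assume t: "s < t" "t < 1"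
    have "(\<phi> has_real_derivative D t) (at t)"
      using deriv[of t] t s at_within_Icc_at[of 0 t 1] by auto
    then have "(\<psi> has_real_derivative (D t * t - \<phi> t) / t\<^sup>2 - c) (at t)"
      unfolding \<psi>_def using t s
      by (auto intro!: derivative_eq_intros simp: power2_eq_square)
    moreover have "(D t * t - \<phi> t) / t\<^sup>2 - c \<ge> 0"
      using growth[of t] t s by (simp add: field_simps)
    ultimately show "\<exists>y. (\<psi> has_real_derivative y) (at t) \<and> 0 \<le> y"
      by blast
  next
    have "continuous_on {0..1} \<phi>"
      using deriv by (meson DERIV_continuous continuous_on_eq_continuous_within)
    then show "continuous_on {s..1} \<psi>"
      unfolding \<psi>_def using s
      by (auto intro!: continuous_intros elim: continuous_on_subset)
  qed
  then show ?thesis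
    by (simp add: \<psi>_def)
qed

lemma derivative_at_0_le_of_growth:
  fixes \<phi> D :: "real \<Rightarrow> real"
  assumes deriv: "\<And>t. t \<in> {0..1} \<Longrightarrow> (\<phi> has_real_derivative D t) (at t within {0..1})"
    and growth: "\<And>t. 0 < t \<Longrightarrow> t \<le> 1 \<Longrightarrow> \<phi> t + c * t\<^sup>2 \<le> t * D t"
    and "\<phi> 0 = 0"
  shows "D 0 \<le> \<phi> 1 - c"
proof (rule tendsto_le[OF _ tendsto_const])
  show "at (0::real) within {0..1} \<noteq> bot"
    by (simp add: at_within_Icc_at_right)
  have "((\<lambda>s. \<phi> s / s) \<longlongrightarrow> D 0) (at 0 within {0..1})"
    using deriv[of 0] \<open>\<phi> 0 = 0\<close> by (simp add: has_field_derivative_iff)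
  from tendsto_diff[OF this tendsto_mult[OF tendsto_const[of c] tendsto_ident_at]]
  show "((\<lambda>s. \<phi> s / s - c * s) \<longlongrightarrow> D 0) (at 0 within {0..1})"
    by simp
  show "\<forall>\<^sub>F s in at 0 within {0..1}. \<phi> s / s - c * s \<le> \<phi> 1 - c"
    unfolding eventually_at_filter
    by (auto intro!: always_eventually slope_minus_linear_mono[OF deriv growth])
qed

theorem theorem1:
  fixes X :: "(real ^ 'n) set" and f :: "real ^ 'n \<Rightarrow> real"
    and gradf :: "real ^ 'n \<Rightarrow> real ^ 'n" and L\<^sub>f \<kappa>\<^sub>f fstar :: real
  assumes X_ne: "X \<noteq> {}" and X_closed: "closed X" and X_convex: "convex X"
    and f_convex: "convex_on X f"
    and f_grad: "\<And>x. x \<in> X \<Longrightarrow> (f has_derivative (\<lambda>h. gradf x \<bullet> h)) (at x within X)"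
    and grad_cont: "continuous_on X gradf"
    and L_pos: "L\<^sub>f > 0"
    and grad_lip: "\<And>x y. x \<in> X \<Longrightarrow> y \<in> X \<Longrightarrow> norm (gradf x - gradf y) \<le> L\<^sub>f * norm (x - y)"
    and fstar_def: "fstar = (INF x\<in>X. f x)"
    and fstar_bdd: "bdd_below (f ` X)"
    and Xstar_ne: "{x\<in>X. f x = fstar} \<noteq> {}"
    and Xstar_closed: "closed {x\<in>X. f x = fstar}"
    and kappa_pos: "\<kappa>\<^sub>f > 0"
    and qsc: "\<And>x. x \<in> X \<Longrightarrow>
      (let xb = closest_point {y\<in>X. f y = fstar} x in
        fstar \<ge> f x + gradf x \<bullet> (xb - x) + \<kappa>\<^sub>f / 2 * (norm (x - xb))\<^sup>2)"
  shows "\<forall>x\<in>X. (let xb = closest_point {y\<in>X. f y = fstar} x in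
        f x \<ge> fstar + gradf xb \<bullet> (x - xb) + \<kappa>\<^sub>f / 2 * (norm (x - xb))\<^sup>2)"
proof (intro ballI, unfold Let_def)
  fix x assume "x \<in> X"
  define S where "S = {y\<in>X. f y = fstar}"
  define xb where "xb = closest_point S x"
  define xt where "xt t = xb + t *\<^sub>R (x - xb)" for t
  have "fstar \<le> f y" if "y \<in> X" for y
    unfolding fstar_def using that fstar_bdd by (simp add: cINF_lower)
  then have S_convex: "convex S"
    unfolding S_def using convex_minimizers[OF X_convex f_convex] by blast
  have "xb \<in> S"
    unfolding xb_def using closest_point_in_set Xstar_closed Xstar_ne S_def by metis
  then have xb: "xb \<in> X" "f xb = fstar"
    by (auto simp: S_def)
  have xt_X: "xt t \<in> X" if "t \<in> {0..1}" for t
    using convexD_alt[OF X_convex xb(1) \<open>x \<in> X\<close>, of t] that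
    by (simp add: xt_def algebra_simps)
  have xt_proj: "closest_point S (xt t) = xb" if "0 \<le> t" for t
    unfolding xt_def xb_def
    using closest_point_on_ray[OF S_convex _ _ that] Xstar_closed Xstar_ne S_def by metis
  have "gradf (xt 0) \<bullet> (x - xb) \<le> (f (xt 1) - fstar) - \<kappa>\<^sub>f / 2 * (norm (x - xb))\<^sup>2"
  proof (rule derivative_at_0_le_of_growth[where \<phi> = "\<lambda>t. f (xt t) - fstar"
        and D = "\<lambda>t. gradf (xt t) \<bullet> (x - xb)" and c = "\<kappa>\<^sub>f / 2 * (norm (x - xb))\<^sup>2"])
    show "((\<lambda>t. f (xt t) - fstar) has_real_derivative gradf (xt t) \<bullet> (x - xb))
            (at t within {0..1})" if "t \<in> {0..1}" for t
      using has_derivative_along_segment[OF f_grad xt_X[unfolded xt_def] that]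
      unfolding xt_def by (auto intro!: derivative_eq_intros)
    show "f (xt t) - fstar + \<kappa>\<^sub>f / 2 * (norm (x - xb))\<^sup>2 * t\<^sup>2
            \<le> t * (gradf (xt t) \<bullet> (x - xb))" if "0 < t" "t \<le> 1" for t
    proof -
      have "f (xt t) + gradf (xt t) \<bullet> (xb - xt t) + \<kappa>\<^sub>f / 2 * (norm (xt t - xb))\<^sup>2 \<le> fstar"
        using qsc[OF xt_X] xt_proj that by (simp add: S_def Let_def)
      moreover have "gradf (xt t) \<bullet> (xb - xt t) = - t * (gradf (xt t) \<bullet> (x - xb))"
        by (simp add: xt_def)
      moreover have "(norm (xt t - xb))\<^sup>2 = t\<^sup>2 * (norm (x - xb))\<^sup>2"
        using that by (simp add: xt_def power_mult_distrib)
      ultimately show ?thesis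
        by (simp add: algebra_simps)
    qed
  qed (simp add: xt_def xb)
  then show "fstar + gradf (closest_point {y\<in>X. f y = fstar} x) \<bullet> (x - closest_point {y\<in>X. f y = fstar} x)
      + \<kappa>\<^sub>f / 2 * (norm (x - closest_point {y\<in>X. f y = fstar} x))\<^sup>2 \<le> f x"
    by (simp add: xt_def xb_def S_def)
qed

end
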